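(* $\mathcal{F}^{(n)}$ is coinitial in $\mathcal{F}_0^{(n)}$: for every $\mathbb{A}\in\mathcal{F}_0^{(n)}$ there exist $\mathbb{B}\in\mathcal{F}^{(n)}$ and an epimorphism $\mathbb{B}\to\mathbb{A}$.
   Context: Fix $m\in\mathbb{N}$, $n\ge0$. $\sigma=\{s_1,\dots,s_m\}$ binary relation symbols; $\sigma^{(n)}=\sigma\cup\{p_1,\dots,p_n\}$ with constant symbols. All structures here are finite. An epimorphism is a surjection $\phi$ with $\phi(s_i^{\mathbb{A}})=s_i^{\mathbb{B}}$ (componentwise images) and $\phi(p_j^{\mathbb{A}})=p_j^{\mathbb{B}}$. A binary relation $s$ on $A$ is surjective if for every $a$ there are $b,c$ with $(a,b),(c,a)\in s$; $a$ is outgoing for $s$ if $|\{b:(b,a)\in s\}|=1$ and $|\{b:(a,b)\in s\}|\ge2$. $\mathcal{F}_0$: finite $\sigma$-structures with all $s_i$ surjective. $\mathcal{F}$: members of $\mathcal{F}_0$ where (i) every point is outgoing for exactly one of $s_1,s_1^{-1},\dots,s_m,s_m^{-1}$, (ii) if $(a,b)\in s_i$ then $a$ is $s_i$-outgoing or $b$ is $s_i^{-1}$-outgoing. $\mathcal{F}_0^{(n)}$: finite $\sigma^{(n)}$-structures whose $\sigma$-reduct lies in $\mathcal{F}_0$ and with $(p_j,p_j)\in s_i$ for all $i\in[m]$, $j\in[n]$. For $\mathbb{A}\in\mathcal{F}$, $\mathbb{A}^{(n)}$ has universe $A\sqcup[n]$, $s_i^{\mathbb{A}^{(n)}}=s_i^{\mathbb{A}}\cup\{(j,j):j\in[n]\}$,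 $p_j^{\mathbb{A}^{(n)}}=j$; $\mathcal{F}^{(n)}=\{\mathbb{A}^{(n)}:\mathbb{A}\in\mathcal{F}\}$. *)

theory Defs
  imports Main
begin

text \<open>A sigma-structure has a universe and binary relations
  rel i for i in {1..m}; a sigma^(n)-structure additionally has constants cst j for
  j in {1..n}. Values of rel / cst at indices outside these ranges are irrelevant.\<close>

record 'a sig_str =
  univ :: "'a set"
  rel  :: "nat \<Rightarrow> ('a \<times> 'a) set"

record 'a sign_str = "'a sig_str" +
  cst :: "nat \<Rightarrow> 'a"

definition fin_sig_str :: "nat \<Rightarrow> ('a, 'b) sig_str_scheme \<Rightarrow> bool" where
  "fin_sig_str m A \<longleftrightarrow> finite (univ A) \<and> (\<forall>i\<in>{1..m}. rel A i \<subseteq> univ A \<times> univ A)"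

definition surjective_rel :: "'a set \<Rightarrow> ('a \<times> 'a) set \<Rightarrow> bool" where
  "surjective_rel X s \<longleftrightarrow> (\<forall>a\<in>X. \<exists>b c. (a, b) \<in> s \<and> (c, a) \<in> s)"

definition outgoing :: "('a \<times> 'a) set \<Rightarrow> 'a \<Rightarrow> bool" where
  "outgoing s a \<longleftrightarrow> card {b. (b, a) \<in> s} = 1 \<and> card {b. (a, b) \<in> s} \<ge> 2"

definition dir_rel :: "bool \<Rightarrow> ('a \<times> 'a) set \<Rightarrow> ('a \<times> 'a) set" where
  "dir_rel d s = (if d then s else converse s)"

definition F0 :: "nat \<Rightarrow> ('a, 'b) sig_str_scheme \<Rightarrow> bool" where
  "F0 m A \<longleftrightarrow> fin_sig_str m A \<and> (\<forall>i\<in>{1..m}. surjective_rel (univ A) (rel A i))"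

definition Fcal :: "nat \<Rightarrow> ('a, 'b) sig_str_scheme \<Rightarrow> bool" where
  "Fcal m A \<longleftrightarrow> F0 m A
     \<and> (\<forall>a\<in>univ A. card {(i, d). i \<in> {1..m} \<and> outgoing (dir_rel d (rel A i)) a} = 1)
     \<and> (\<forall>i\<in>{1..m}. \<forall>a b. (a, b) \<in> rel A i \<longrightarrow>
          outgoing (rel A i) a \<or> outgoing (converse (rel A i)) b)"

definition F0n :: "nat \<Rightarrow> nat \<Rightarrow> 'a sign_str \<Rightarrow> bool" where
  "F0n m n A \<longleftrightarrow> F0 m A \<and> (\<forall>j\<in>{1..n}. cst A j \<in> univ A)
     \<and> (\<forall>i\<in>{1..m}. \<forall>j\<in>{1..n}. (cst A j, cst A j) \<in> rel A i)"

text \<open>A^(n): universe A disjoint-union [n] (Inl / Inr), loops at the new points, p_j = j.\<close>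
definition ext_n :: "nat \<Rightarrow> 'b sig_str \<Rightarrow> ('b + nat) sign_str" where
  "ext_n n A = \<lparr> univ = Inl ` univ A \<union> Inr ` {1..n},
     rel = (\<lambda>i. map_prod Inl Inl ` rel A i \<union> (\<lambda>j. (Inr j, Inr j)) ` {1..n}),
     cst = (\<lambda>j. Inr j) \<rparr>"

definition epi :: "nat \<Rightarrow> nat \<Rightarrow> ('a \<Rightarrow> 'c) \<Rightarrow> 'a sign_str \<Rightarrow> 'c sign_str \<Rightarrow> bool" where
  "epi m n \<phi> A B \<longleftrightarrow> \<phi> ` univ A = univ B
     \<and> (\<forall>i\<in>{1..m}. map_prod \<phi> \<phi> ` rel A i = rel B i)
     \<and> (\<forall>j\<in>{1..n}. \<phi> (cst A j) = cst B j)"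

end

theory Submission
  imports Defs
begin

text \<open>Choose predecessor and successor maps \<open>p\<^sub>j\<close>, \<open>q\<^sub>j\<close> for every \<open>s\<^sub>j\<close>, which exist by
  surjectivity. Covering each point by copies that are each designated outgoing for exactly
  one of \<open>s\<^sub>i\<close>, \<open>s\<^sub>i\<inverse>\<close>, and wiring the copies along \<open>p\<^sub>i\<close>, \<open>q\<^sub>i\<close> and the edges of \<open>s\<^sub>i\<close>,
  yields a structure in \<open>\<F>\<close> that projects epimorphically onto the \<open>\<sigma>\<close>-reduct. The constants
  carry loops in every \<open>s\<^sub>i\<close>, so sending the \<open>n\<close> adjoined looped points to them extends the
  projection to an epimorphism of \<open>\<sigma>\<^sup>(\<^sup>n\<^sup>)\<close>-structures.\<close>

definition sig_epi :: "nat \<Rightarrow> ('a \<Rightarrow> 'c) \<Rightarrow> ('a, 'b) sig_str_scheme \<Rightarrow> ('c, 'd) sig_str_scheme \<Rightarrow> bool" where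
  "sig_epi m \<phi> A B \<longleftrightarrow> \<phi> ` univ A = univ B \<and> (\<forall>i\<in>{1..m}. map_prod \<phi> \<phi> ` rel A i = rel B i)"

definition image_sig_str :: "('a \<Rightarrow> 'c) \<Rightarrow> ('a, 'b) sig_str_scheme \<Rightarrow> 'c sig_str" where
  "image_sig_str g A = \<lparr>univ = g ` univ A, rel = (\<lambda>i. map_prod g g ` rel A i)\<rparr>"

lemma preds_map_prod_image:
  assumes "inj_on g U" and "S \<subseteq> U \<times> U" and "a \<in> U"
  shows "{b. (b, g a) \<in> map_prod g g ` S} = g ` {b. (b, a) \<in> S}"
  using assms by (auto simp: inj_on_def intro: map_prod_imageI)

lemma outgoing_map_prod_image:
  assumes g: "inj_on g U" and S: "S \<subseteq> U \<times> U" and a: "a \<in> U"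
  shows "outgoing (map_prod g g ` S) (g a) \<longleftrightarrow> outgoing S a"
proof -
  have S': "converse S \<subseteq> U \<times> U" using S by auto
  have "{b. (g a, b) \<in> map_prod g g ` S} = {b. (b, g a) \<in> map_prod g g ` converse S}"
    by auto
  also have "\<dots> = g ` {b. (a, b) \<in> S}"
    using preds_map_prod_image[OF g S' a] by simp
  finally have succs: "{b. (g a, b) \<in> map_prod g g ` S} = g ` {b. (a, b) \<in> S}" .
  have "inj_on g {b. (b, a) \<in> S}" "inj_on g {b. (a, b) \<in> S}"
    using S by (auto intro: inj_on_subset[OF g])
  then show ?thesis
    by (simp add: outgoing_def preds_map_prod_image[OF g S a] succs card_image)
qed

lemma Fcal_image_sig_str:
  assumes g: "inj_on g (univ B)" and F: "Fcal m B"
  shows "Fcal m (image_sig_str g B)"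
proof -
  let ?U = "univ B" and ?S = "\<lambda>i. map_prod g g ` rel B i"
  have sub: "\<And>i. i \<in> {1..m} \<Longrightarrow> rel B i \<subseteq> ?U \<times> ?U" and fin: "finite ?U"
    and surj: "\<And>i. i \<in> {1..m} \<Longrightarrow> surjective_rel ?U (rel B i)"
    and types: "\<And>a. a \<in> ?U \<Longrightarrow> card {(i, d). i \<in> {1..m} \<and> outgoing (dir_rel d (rel B i)) a} = 1"
    and edges: "\<And>i a b. i \<in> {1..m} \<Longrightarrow> (a, b) \<in> rel B i \<Longrightarrow>
                  outgoing (rel B i) a \<or> outgoing (converse (rel B i)) b"
    using F by (auto simp: Fcal_def F0_def fin_sig_str_def)
  have outg: "outgoing (dir_rel d (?S i)) (g a) \<longleftrightarrow> outgoing (dir_rel d (rel B i)) a"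
    if "i \<in> {1..m}" "a \<in> ?U" for i d a
  proof -
    have "dir_rel d (?S i) = map_prod g g ` dir_rel d (rel B i)"
      by (auto simp: dir_rel_def)
    moreover have "dir_rel d (rel B i) \<subseteq> ?U \<times> ?U"
      using sub[OF that(1)] by (auto simp: dir_rel_def)
    ultimately show ?thesis
      using outgoing_map_prod_image[OF g _ that(2)] by simp
  qed
  have "fin_sig_str m (image_sig_str g B)"
    using fin sub by (fastforce simp: fin_sig_str_def image_sig_str_def)
  moreover have "surjective_rel (g ` ?U) (?S i)" if "i \<in> {1..m}" for i
    using surj[OF that] by (fastforce simp: surjective_rel_def)
  moreover have "card {(i, d). i \<in> {1..m} \<and> outgoing (dir_rel d (?S i)) (g a)} = 1"
    if "a \<in> ?U" for a
  proof -
    have "{(i, d). i \<in> {1..m} \<and> outgoing (dir_rel d (?S i)) (g a)}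
        = {(i, d). i \<in> {1..m} \<and> outgoing (dir_rel d (rel B i)) a}"
      using outg[OF _ that] by auto
    then show ?thesis using types[OF that] by simp
  qed
  moreover have "outgoing (?S i) a' \<or> outgoing (converse (?S i)) b'"
    if i: "i \<in> {1..m}" and e: "(a', b') \<in> ?S i" for i a' b'
  proof -
    obtain a b where ab: "(a, b) \<in> rel B i" "a' = g a" "b' = g b" using e by blast
    then have "a \<in> ?U" "b \<in> ?U" using sub[OF i] by auto
    then show ?thesis
      using edges[OF i ab(1)] outg[OF i, of _ True] outg[OF i, of _ False] ab
      by (simp add: dir_rel_def)
  qed
  ultimately show ?thesis
    unfolding Fcal_def F0_def image_sig_str_def by auto
qed

lemma sig_epi_image_sig_str:
  assumes g: "inj_on g (univ B)" and B: "fin_sig_str m B" and \<pi>: "sig_epi m \<pi> B A"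
  shows "sig_epi m (\<pi> \<circ> inv_into (univ B) g) (image_sig_str g B) A"
proof -
  have \<pi>_inv: "(\<pi> \<circ> inv_into (univ B) g) (g a) = \<pi> a" if "a \<in> univ B" for a
    using inv_into_f_f[OF g that] by simp
  have "map_prod (\<pi> \<circ> inv_into (univ B) g) (\<pi> \<circ> inv_into (univ B) g) ` map_prod g g ` rel B i
      = map_prod \<pi> \<pi> ` rel B i" if "i \<in> {1..m}" for i
    using B that \<pi>_inv unfolding fin_sig_str_def image_image
    by (intro image_cong) (auto simp: subset_iff)
  moreover have "(\<pi> \<circ> inv_into (univ B) g) ` g ` univ B = \<pi> ` univ B"
    using \<pi>_inv by (simp add: image_image cong: image_cong)
  ultimately show ?thesis
    using \<pi> by (simp add: sig_epi_def image_sig_str_def)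
qed

lemma epi_ext_n_if_sig_epi:
  assumes \<pi>: "sig_epi m \<pi> B A" and A: "F0n m n A"
  shows "epi m n (case_sum \<pi> (cst A)) (ext_n n B) A"
proof -
  have cst: "cst A ` {1..n} \<subseteq> univ A"
    and loops: "\<And>i. i \<in> {1..m} \<Longrightarrow> (\<lambda>j. (cst A j, cst A j)) ` {1..n} \<subseteq> rel A i"
    using A by (auto simp: F0n_def)
  have "case_sum \<pi> (cst A) ` univ (ext_n n B) = \<pi> ` univ B \<union> cst A ` {1..n}"
    by (simp add: ext_n_def image_Un image_image)
  moreover have "map_prod (case_sum \<pi> (cst A)) (case_sum \<pi> (cst A)) ` rel (ext_n n B) i
      = map_prod \<pi> \<pi> ` rel B i \<union> (\<lambda>j. (cst A j, cst A j)) ` {1..n}" for i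
    by (simp add: ext_n_def image_Un image_image map_prod_def case_prod_beta')
  ultimately show ?thesis
    using \<pi> cst loops by (simp add: epi_def sig_epi_def ext_n_def Un_absorb2)
qed

type_synonym 'x cover_vertex = "nat \<times> bool \<times> 'x \<times> bool"

locale F0_cover =
  fixes m :: nat and A :: "('x, 'c) sig_str_scheme" and p q :: "nat \<Rightarrow> 'x \<Rightarrow> 'x"
  assumes fin: "fin_sig_str m A"
    and pred: "\<And>j x. j \<in> {1..m} \<Longrightarrow> x \<in> univ A \<Longrightarrow> (p j x, x) \<in> rel A j"
    and succ: "\<And>j x. j \<in> {1..m} \<Longrightarrow> x \<in> univ A \<Longrightarrow> (x, q j x) \<in> rel A j"
begin

definition V :: "'x cover_vertex set" where
  "V = {1..m} \<times> UNIV \<times> univ A \<times> UNIV"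

text \<open>A vertex \<open>(i, d, y, k)\<close> is a copy of \<open>y\<close> that is to be outgoing for \<open>s\<^sub>i\<close> if \<open>d\<close> and
  for \<open>s\<^sub>i\<inverse>\<close> otherwise; the flag \<open>k\<close> doubles every vertex, which provides the out-degree
  (in-degree) at least 2. The edges of \<open>E j\<close> are: \<open>p\<^sub>j\<close>-chains into and \<open>q\<^sub>j\<close>-chains out of
  the copies of type \<open>(j, d)\<close>, which are their unique in- resp. out-neighbours; all \<open>s\<^sub>j\<close>-edges
  from \<open>(j, True)\<close>-copies to \<open>(j, False)\<close>-copies; and one in- and one out-edge at each copy
  of a type \<open>i \<noteq> j\<close>.\<close>

definition E :: "nat \<Rightarrow> ('x cover_vertex \<times> 'x cover_vertex) set" where
  "E j = {((i1, d1, y1, k1), (i2, d2, y2, k2)).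
      (i1 = j \<and> d1 \<and> i2 = j \<and> d2 \<and> y2 \<in> univ A \<and> y1 = p j y2 \<and> k1 = k2)
    \<or> (i1 = j \<and> \<not> d1 \<and> i2 = j \<and> \<not> d2 \<and> y1 \<in> univ A \<and> y2 = q j y1 \<and> k1 = k2)
    \<or> (i1 = j \<and> d1 \<and> i2 = j \<and> \<not> d2 \<and> (y1, y2) \<in> rel A j)
    \<or> (i1 = j \<and> d1 \<and> k1 \<and> i2 \<in> {1..m} \<and> i2 \<noteq> j \<and> y2 \<in> univ A \<and> y1 = p j y2)
    \<or> (i2 = j \<and> \<not> d2 \<and> k2 \<and> i1 \<in> {1..m} \<and> i1 \<noteq> j \<and> y1 \<in> univ A \<and> y2 = q j y1)}"

definition cover :: "'x cover_vertex sig_str" where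
  "cover = \<lparr>univ = V, rel = E\<rparr>"

lemma mem_E [simp]:
  "((i1, d1, y1, k1), (i2, d2, y2, k2)) \<in> E j \<longleftrightarrow>
      (i1 = j \<and> d1 \<and> i2 = j \<and> d2 \<and> y2 \<in> univ A \<and> y1 = p j y2 \<and> k1 = k2)
    \<or> (i1 = j \<and> \<not> d1 \<and> i2 = j \<and> \<not> d2 \<and> y1 \<in> univ A \<and> y2 = q j y1 \<and> k1 = k2)
    \<or> (i1 = j \<and> d1 \<and> i2 = j \<and> \<not> d2 \<and> (y1, y2) \<in> rel A j)
    \<or> (i1 = j \<and> d1 \<and> k1 \<and> i2 \<in> {1..m} \<and> i2 \<noteq> j \<and> y2 \<in> univ A \<and> y1 = p j y2)
    \<or> (i2 = j \<and> \<not> d2 \<and> k2 \<and> i1 \<in> {1..m} \<and> i1 \<noteq> j \<and> y1 \<in> univ A \<and> y2 = q j y1)"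
  by (simp add: E_def)

lemma rel_A_subset: "j \<in> {1..m} \<Longrightarrow> rel A j \<subseteq> univ A \<times> univ A"
  using fin by (simp add: fin_sig_str_def)

lemma pred_in_univ: "j \<in> {1..m} \<Longrightarrow> x \<in> univ A \<Longrightarrow> p j x \<in> univ A"
  using pred rel_A_subset by blast

lemma succ_in_univ: "j \<in> {1..m} \<Longrightarrow> x \<in> univ A \<Longrightarrow> q j x \<in> univ A"
  using succ rel_A_subset by blast

lemma finite_V: "finite V"
  using fin by (simp add: V_def fin_sig_str_def)

lemma E_subset_V: "j \<in> {1..m} \<Longrightarrow> E j \<subseteq> V \<times> V"
  using rel_A_subset pred_in_univ succ_in_univ by (fastforce simp: V_def E_def)


lemma preds_positive:
  "j \<in> {1..m} \<Longrightarrow> y \<in> univ A \<Longrightarrow> {b. (b, (j, True, y, k)) \<in> E j} = {(j, True, p j y, k)}"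
  by auto

lemma succs_negative:
  "j \<in> {1..m} \<Longrightarrow> y \<in> univ A \<Longrightarrow> {b. ((j, False, y, k), b) \<in> E j} = {(j, False, q j y, k)}"
  by auto

lemma preds_other:
  "i \<in> {1..m} \<Longrightarrow> i \<noteq> j \<Longrightarrow> y \<in> univ A \<Longrightarrow>
    {b. (b, (i, d, y, k)) \<in> E j} = {(j, True, p j y, True)}"
  by auto

lemma succs_other:
  "i \<in> {1..m} \<Longrightarrow> i \<noteq> j \<Longrightarrow> y \<in> univ A \<Longrightarrow>
    {b. ((i, d, y, k), b) \<in> E j} = {(j, False, q j y, True)}"
  by auto

lemma two_le_card_succs_positive:
  assumes "j \<in> {1..m}" "y \<in> univ A"
  shows "2 \<le> card {b. ((j, True, y, k), b) \<in> E j}"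
proof -
  have sub: "{(j, False, q j y, True), (j, False, q j y, False)} \<subseteq> {b. ((j, True, y, k), b) \<in> E j}"
    using succ[OF assms] by simp
  have "finite {b. ((j, True, y, k), b) \<in> E j}"
    by (rule finite_subset[OF _ finite_V]) (use E_subset_V[OF assms(1)] in auto)
  from card_mono[OF this sub] show ?thesis by simp
qed

lemma two_le_card_preds_negative:
  assumes "j \<in> {1..m}" "y \<in> univ A"
  shows "2 \<le> card {b. (b, (j, False, y, k)) \<in> E j}"
proof -
  have sub: "{(j, True, p j y, True), (j, True, p j y, False)} \<subseteq> {b. (b, (j, False, y, k)) \<in> E j}"
    using pred[OF assms] by simp
  have "finite {b. (b, (j, False, y, k)) \<in> E j}"
    by (rule finite_subset[OF _ finite_V]) (use E_subset_V[OF assms(1)] in auto)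
  from card_mono[OF this sub] show ?thesis by simp
qed

lemma outgoing_E_iff:
  assumes j: "j \<in> {1..m}" and v: "(i, e, y, k) \<in> V"
  shows "outgoing (dir_rel d (E j)) (i, e, y, k) \<longleftrightarrow> i = j \<and> e = d"
proof -
  have i: "i \<in> {1..m}" and y: "y \<in> univ A" using v by (auto simp: V_def)
  consider "i = j" "e" | "i = j" "\<not> e" | "i \<noteq> j" by blast
  then show ?thesis
  proof cases
    case 1
    then show ?thesis
      using preds_positive[OF j y] two_le_card_succs_positive[OF j y]
      by (cases d) (auto simp: outgoing_def dir_rel_def)
  next
    case 2
    then show ?thesis
      using succs_negative[OF j y] two_le_card_preds_negative[OF j y]
      by (cases d) (auto simp: outgoing_def dir_rel_def)
  next
    case 3
    then show ?thesis
      using preds_other[OF i 3 y] succs_other[OF i 3 y]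
      by (cases d) (auto simp: outgoing_def dir_rel_def)
  qed
qed

lemma surjective_E:
  assumes j: "j \<in> {1..m}"
  shows "surjective_rel V (E j)"
  unfolding surjective_rel_def
proof
  fix v assume "v \<in> V"
  then obtain i e y k where v: "v = (i, e, y, k)" "i \<in> {1..m}" "y \<in> univ A"
    by (auto simp: V_def)
  have "(v, (j, False, q j y, if i = j \<and> \<not> e then k else True)) \<in> E j"
    using succ[OF j v(3)] v by auto
  moreover have "((j, True, p j y, if i = j \<and> e then k else True), v) \<in> E j"
    using pred[OF j v(3)] v by auto
  ultimately show "\<exists>b c. (v, b) \<in> E j \<and> (c, v) \<in> E j" by blast
qed

lemma Fcal_cover: "Fcal m cover"
proof -
  have "fin_sig_str m cover"
    using finite_V E_subset_V by (simp add: fin_sig_str_def cover_def)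
  moreover have "{(j, d). j \<in> {1..m} \<and> outgoing (dir_rel d (E j)) v} = {(fst v, fst (snd v))}"
    if "v \<in> V" for v
    using that outgoing_E_iff by (auto simp: V_def)
  moreover have "outgoing (E j) a \<or> outgoing (converse (E j)) b"
    if j: "j \<in> {1..m}" and ab: "(a, b) \<in> E j" for j a b
  proof -
    have "a \<in> V" "b \<in> V" using ab E_subset_V[OF j] by auto
    moreover have "(fst a = j \<and> fst (snd a)) \<or> (fst b = j \<and> \<not> fst (snd b))"
      using ab by (cases a; cases b) auto
    ultimately show ?thesis
      using outgoing_E_iff[OF j, of _ _ _ _ True] outgoing_E_iff[OF j, of _ _ _ _ False]
      by (cases a; cases b) (auto simp: dir_rel_def)
  qed
  ultimately show ?thesis
    using surjective_E by (simp add: Fcal_def F0_def cover_def)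
qed

lemma sig_epi_cover:
  assumes "m \<ge> 1"
  shows "sig_epi m (\<lambda>(i, d, y, k). y) cover A"
proof -
  have "(\<lambda>(i, d, y, k). y) ` V = univ A"
    using assms by (force simp: V_def)
  moreover have "map_prod (\<lambda>(i, d, y, k). y) (\<lambda>(i, d, y, k). y) ` E j = rel A j"
    if j: "j \<in> {1..m}" for j
  proof
    show "map_prod (\<lambda>(i, d, y, k). y) (\<lambda>(i, d, y, k). y) ` E j \<subseteq> rel A j"
      using pred[OF j] succ[OF j] by (auto simp: E_def)
    show "rel A j \<subseteq> map_prod (\<lambda>(i, d, y, k). y) (\<lambda>(i, d, y, k). y) ` E j"
    proof
      fix e assume "e \<in> rel A j"
      then have "((j, True, fst e, True), (j, False, snd e, True)) \<in> E j" by simp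
      then show "e \<in> map_prod (\<lambda>(i, d, y, k). y) (\<lambda>(i, d, y, k). y) ` E j"
        by (rule rev_image_eqI) simp
    qed
  qed
  ultimately show ?thesis
    by (simp add: sig_epi_def cover_def)
qed

end


lemma F0_pred_succ_choice:
  assumes "F0 m A"
  obtains p q where "\<And>j x. j \<in> {1..m} \<Longrightarrow> x \<in> univ A \<Longrightarrow> (p j x, x) \<in> rel A j"
    and "\<And>j x. j \<in> {1..m} \<Longrightarrow> x \<in> univ A \<Longrightarrow> (x, q j x) \<in> rel A j"
proof -
  have "\<forall>j x. \<exists>y z. j \<in> {1..m} \<and> x \<in> univ A \<longrightarrow> (y, x) \<in> rel A j \<and> (x, z) \<in> rel A j"
    using assms by (auto simp: F0_def surjective_rel_def)
  then show ?thesis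
    using that by metis
qed

lemma F0_has_Fcal_cover_on_nat:
  assumes "m \<ge> 1" and A: "F0 m A"
  shows "\<exists>(B :: nat sig_str) \<pi>. Fcal m B \<and> sig_epi m \<pi> B A"
proof -
  obtain p q where "\<And>j x. j \<in> {1..m} \<Longrightarrow> x \<in> univ A \<Longrightarrow> (p j x, x) \<in> rel A j"
    and "\<And>j x. j \<in> {1..m} \<Longrightarrow> x \<in> univ A \<Longrightarrow> (x, q j x) \<in> rel A j"
    using F0_pred_succ_choice[OF A] by blast
  then interpret F0_cover m A p q
    using A by unfold_locales (auto simp: F0_def)
  obtain g :: "'a cover_vertex \<Rightarrow> nat" where g: "inj_on g (univ cover)"
    using finite_imp_inj_to_nat_seg[OF finite_V] by (auto simp: cover_def)
  have "Fcal m (image_sig_str g cover)"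
    using Fcal_image_sig_str[OF g Fcal_cover] .
  moreover have "sig_epi m ((\<lambda>(i, d, y, k). y) \<circ> inv_into (univ cover) g) (image_sig_str g cover) A"
    using sig_epi_image_sig_str[OF g _ sig_epi_cover[OF assms(1)]] Fcal_cover
    by (simp add: Fcal_def F0_def)
  ultimately show ?thesis
    by blast
qed

theorem lemma3p3:
  fixes m n :: nat and A :: "'a sign_str"
  assumes "m \<ge> 1"
    and "F0n m n A"
  shows "\<exists>(B :: nat sig_str) (\<phi> :: nat + nat \<Rightarrow> 'a). Fcal m B \<and> epi m n \<phi> (ext_n n B) A"
proof -
  have "F0 m A"
    using assms(2) by (simp add: F0n_def)
  then obtain B :: "nat sig_str" and \<pi> where "Fcal m B" and "sig_epi m \<pi> B A"
    using F0_has_Fcal_cover_on_nat[OF assms(1)] by blast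
  then show ?thesis
    using epi_ext_n_if_sig_epi[OF _ assms(2)] by blast
qed

end
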